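(* Let $A,M\in\mathbb{R}^{n\times n}$ with $M$ nonsingular, $B\in\mathbb{R}^{n\times r}$, and shifts $\alpha_1,\ldots,\alpha_j\in\mathbb{C}$ with $\mathrm{Re}(\alpha_i)<0$. Run $j$ steps of the inexact LR-ADI iteration described in the context, producing $v_i,s_i,w_i$ and $Z_j$. Then $$AZ_j=MZ_jT_j+w_jg_j^*-S_j\Gamma_j,\qquad S_j:=[s_1,\ldots,s_j],$$ where $T_j=\tilde T_j\otimes I_r$ with $\tilde T_j\in\mathbb{C}^{j\times j}$ lower triangular, $(\tilde T_j)_{ii}=\overline{\alpha_i}$, $(\tilde T_j)_{ik}=-\gamma_i\gamma_k$ for $i>k$; $g_j:=[\gamma_1,\ldots,\gamma_j]^T\otimes I_r$; and $\Gamma_j:=\mathrm{diag}(\gamma_1,\ldots,\gamma_j)\otimes I_r$. Moreover, $$AZ_jZ_j^*M^*+MZ_jZ_j^*A^*+BB^*=-S_j\Gamma_jZ_j^*M^*-MZ_j\Gamma_jS_j^*+w_jw_j^*.$$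
   Context: Inexact LR-ADI iteration: $w_0:=B$, $\gamma_i:=\sqrt{-2\,\mathrm{Re}(\alpha_i)}$; for $i=1,\ldots,j$, $v_i\in\mathbb{C}^{n\times r}$ is an arbitrary (approximate) solution of $(A+\alpha_iM)v=w_{i-1}$ with residual $s_i:=w_{i-1}-(A+\alpha_iM)v_i$, and $w_i:=w_{i-1}+\gamma_i^2Mv_i$; $Z_j:=[\gamma_1v_1,\ldots,\gamma_jv_j]\in\mathbb{C}^{n\times jr}$. $^*$ is conjugate transpose, $\overline{\alpha}$ complex conjugate, $\otimes$ the Kronecker product. *)

theory Defs
  imports "Jordan_Normal_Form.Matrix"
begin

definition adj :: "complex mat \<Rightarrow> complex mat" where
  "adj X = mat (dim_col X) (dim_row X) (\<lambda>(i,k). cnj (X $$ (k,i)))"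

definition kron :: "complex mat \<Rightarrow> complex mat \<Rightarrow> complex mat" where
  "kron X Y = mat (dim_row X * dim_row Y) (dim_col X * dim_col Y)
     (\<lambda>(i,k). X $$ (i div dim_row Y, k div dim_col Y) * Y $$ (i mod dim_row Y, k mod dim_col Y))"

definition cmat :: "real mat \<Rightarrow> complex mat" where
  "cmat X = map_mat complex_of_real X"

text \<open>gamma_i = sqrt(-2 Re alpha_i) (shifts are indexed from 1).\<close>
definition gam :: "(nat \<Rightarrow> complex) \<Rightarrow> nat \<Rightarrow> complex" where
  "gam \<alpha> i = complex_of_real (sqrt (- 2 * Re (\<alpha> i)))"

primrec adi_w :: "complex mat \<Rightarrow> complex mat \<Rightarrow> (nat \<Rightarrow> complex) \<Rightarrow> (nat \<Rightarrow> complex mat) \<Rightarrow> nat \<Rightarrow> complex mat" where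
  "adi_w M B \<alpha> v 0 = B"
| "adi_w M B \<alpha> v (Suc i) = adi_w M B \<alpha> v i + (gam \<alpha> (Suc i))\<^sup>2 \<cdot>\<^sub>m (M * v (Suc i))"

definition adi_s :: "complex mat \<Rightarrow> complex mat \<Rightarrow> complex mat \<Rightarrow> (nat \<Rightarrow> complex) \<Rightarrow> (nat \<Rightarrow> complex mat) \<Rightarrow> nat \<Rightarrow> complex mat" where
  "adi_s A M B \<alpha> v i = adi_w M B \<alpha> v (i - 1) - (A + \<alpha> i \<cdot>\<^sub>m M) * v i"

text \<open>Z_j = [gamma_1 v_1, ..., gamma_j v_j] (n x jr).\<close>
definition adi_Z :: "nat \<Rightarrow> nat \<Rightarrow> (nat \<Rightarrow> complex) \<Rightarrow> (nat \<Rightarrow> complex mat) \<Rightarrow> nat \<Rightarrow> complex mat" where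
  "adi_Z n r \<alpha> v j = mat n (j * r) (\<lambda>(p,q). gam \<alpha> (q div r + 1) * v (q div r + 1) $$ (p, q mod r))"

text \<open>S_j = [s_1, ..., s_j] (n x jr).\<close>
definition adi_S :: "nat \<Rightarrow> nat \<Rightarrow> complex mat \<Rightarrow> complex mat \<Rightarrow> complex mat \<Rightarrow> (nat \<Rightarrow> complex) \<Rightarrow> (nat \<Rightarrow> complex mat) \<Rightarrow> nat \<Rightarrow> complex mat" where
  "adi_S n r A M B \<alpha> v j = mat n (j * r) (\<lambda>(p,q). adi_s A M B \<alpha> v (q div r + 1) $$ (p, q mod r))"

text \<open>The lower triangular j x j matrix tilde T_j (0-based indices, shift i+1).\<close>
definition Ttil :: "(nat \<Rightarrow> complex) \<Rightarrow> nat \<Rightarrow> complex mat" where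
  "Ttil \<alpha> j = mat j j (\<lambda>(i,k). if i = k then cnj (\<alpha> (i+1))
                          else if k < i then - (gam \<alpha> (i+1) * gam \<alpha> (k+1)) else 0)"

definition adi_T :: "nat \<Rightarrow> (nat \<Rightarrow> complex) \<Rightarrow> nat \<Rightarrow> complex mat" where
  "adi_T r \<alpha> j = kron (Ttil \<alpha> j) (1\<^sub>m r)"

definition adi_g :: "nat \<Rightarrow> (nat \<Rightarrow> complex) \<Rightarrow> nat \<Rightarrow> complex mat" where
  "adi_g r \<alpha> j = kron (mat j 1 (\<lambda>(i,_). gam \<alpha> (i+1))) (1\<^sub>m r)"

definition adi_Gamma :: "nat \<Rightarrow> (nat \<Rightarrow> complex) \<Rightarrow> nat \<Rightarrow> complex mat" where
  "adi_Gamma r \<alpha> j = kron (mat j j (\<lambda>(i,k). if i = k then gam \<alpha> (i+1) else 0)) (1\<^sub>m r)"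

end

theory Submission
  imports Defs
begin

(* Column block k of Z_j is gam_(k+1) v_(k+1). By the residual equation,
   A v_(k+1) = w_k - alpha_(k+1) M v_(k+1) - s_(k+1), and w_j - w_k = sum over i > k of gam_i^2 M v_i.
   Since alpha + cnj alpha = 2 Re alpha = - gam^2, this is column block k of
   M Z_j T_j + w_j g_j^* - S_j Gamma_j, which is the first identity.
   The second one follows from the first by pure matrix algebra, using only
   T_j + T_j^* = - g_j g_j^* (the same relation between alpha and gam), M Z_j g_j = w_j - B and
   Gamma_j^* = Gamma_j: multiplying the first identity by (M Z_j)^* and adding the adjoint, the T-terms
   give -(w_j - B)(w_j - B)^*, which together with the cross terms and B B^* collapses to w_j w_j^*. *)

lemma sum_lessThan_mult_blocks:
  fixes f :: "nat \<Rightarrow> 'a::comm_monoid_add"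
  shows "(\<Sum>m<a * r. f m) = (\<Sum>i<a. \<Sum>c<r. f (i * r + c))"
proof -
  have "(\<Sum>m<a * r. f m) = (\<Sum>i<a. \<Sum>m\<in>{i * r..<i * r + r}. f m)"
    by (rule sum.nat_group[symmetric])
  also have "\<dots> = (\<Sum>i<a. \<Sum>c<r. f (i * r + c))"
  proof (rule sum.cong[OF refl])
    fix i
    show "(\<Sum>m\<in>{i * r..<i * r + r}. f m) = (\<Sum>c<r. f (i * r + c))"
      using sum.shift_bounds_nat_ivl[of f 0 "i * r" r] by (simp add: atLeast0LessThan add.commute)
  qed
  finally show ?thesis .
qed

lemma sum_lessThan_split_at:
  fixes f :: "nat \<Rightarrow> 'a::comm_monoid_add"
  assumes "k < j"
  shows "(\<Sum>i<j. f i) = (\<Sum>i<k. f i) + f k + (\<Sum>i\<in>{k<..<j}. f i)"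
proof -
  have "(\<Sum>i<j. f i) = (\<Sum>i<Suc k. f i) + (\<Sum>i\<in>{Suc k..<j}. f i)"
    using sum.atLeastLessThan_concat[of 0 "Suc k" j f] assms by (simp add: atLeast0LessThan)
  then show ?thesis by (simp add: atLeastSucLessThan_greaterThanLessThan)
qed

lemma less_mult_blockE:
  fixes q a r :: nat
  assumes "q < a * r"
  obtains k c where "q = k * r + c" "k < a" "c < r"
proof
  show "q = q div r * r + q mod r" by simp
  show "q div r < a" using assms by (simp add: less_mult_imp_div_less)
  show "q mod r < r" using assms by (cases r) auto
qed

lemma block_index_less:
  fixes i a c r :: nat
  assumes "i < a" "c < r"
  shows "i * r + c < a * r"
proof -
  have "(i + 1) * r \<le> a * r" using assms(1) by (intro mult_le_mono1) simp
  with assms(2) show ?thesis by simp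
qed

section \<open>Conjugate transpose\<close>

lemma dim_adj [simp]: "dim_row (adj X) = dim_col X" "dim_col (adj X) = dim_row X"
  by (simp_all add: adj_def)

lemma carrier_adj [simp]: "X \<in> carrier_mat a b \<Longrightarrow> adj X \<in> carrier_mat b a"
  by (auto intro!: carrier_matI)

lemma index_adj [simp]:
  "i < dim_col X \<Longrightarrow> k < dim_row X \<Longrightarrow> adj X $$ (i, k) = cnj (X $$ (k, i))"
  by (simp add: adj_def)

lemma adj_conv_transpose: "adj X = transpose_mat (map_mat cnj X)"
  by (rule eq_matI) auto

lemma adj_mult:
  assumes "X \<in> carrier_mat a b" "Y \<in> carrier_mat b c"
  shows "adj (X * Y) = adj Y * adj X"
proof -
  interpret cnj: semiring_hom cnj by unfold_locales simp_all
  have "map_mat cnj X \<in> carrier_mat a b" "map_mat cnj Y \<in> carrier_mat b c"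
    using assms by simp_all
  then show ?thesis
    using assms by (simp add: adj_conv_transpose cnj.mat_hom_mult transpose_mult)
qed

lemma adj_add:
  "X \<in> carrier_mat a b \<Longrightarrow> Y \<in> carrier_mat a b \<Longrightarrow> adj (X + Y) = adj X + adj Y"
  by (rule eq_matI) auto

lemma adj_minus:
  "X \<in> carrier_mat a b \<Longrightarrow> Y \<in> carrier_mat a b \<Longrightarrow> adj (X - Y) = adj X - adj Y"
  by (rule eq_matI) auto

lemma adj_adj [simp]: "adj (adj X) = X"
  by (rule eq_matI) auto

lemma adj_one [simp]: "adj (1\<^sub>m n) = 1\<^sub>m n"
  by (rule eq_matI) auto

section \<open>The Lyapunov residual of a Sylvester-type equation\<close>

lemma minus_mult_adj_minus:
  assumes X: "X \<in> carrier_mat n r" and Y: "Y \<in> carrier_mat n r"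
  shows "(X - Y) * adj (X - Y) = (X * adj X - Y * adj X) - (X * adj Y - Y * adj Y)"
proof -
  have "(X - Y) * adj (X - Y) = (X - Y) * adj X - (X - Y) * adj Y"
    using X Y by (simp add: adj_minus[OF X Y]
        mult_minus_distrib_mat[OF minus_carrier_mat[OF Y] carrier_adj[OF X] carrier_adj[OF Y]])
  then show ?thesis
    by (simp add: minus_mult_distrib_mat[OF X Y carrier_adj[OF X]]
        minus_mult_distrib_mat[OF X Y carrier_adj[OF Y]])
qed

lemma Sylvester_mult_adj:
  fixes P T G \<Gamma> S w X :: "complex mat"
  assumes P: "P \<in> carrier_mat n m" and T: "T \<in> carrier_mat m m" and G: "G \<in> carrier_mat m r"
    and \<Gamma>: "\<Gamma> \<in> carrier_mat m m" and S: "S \<in> carrier_mat n m"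
    and w: "w \<in> carrier_mat n r"
    and Sylvester: "X = P * T + w * adj G - S * \<Gamma>"
    and adj_\<Gamma>: "adj \<Gamma> = \<Gamma>"
  shows "X * adj P = P * T * adj P + w * adj (P * G) - S * \<Gamma> * adj P"
    and "P * adj X = P * adj T * adj P + P * G * adj w - P * \<Gamma> * adj S"
proof -
  have PT: "P * T \<in> carrier_mat n m" and wG: "w * adj G \<in> carrier_mat n m"
    and S\<Gamma>: "S * \<Gamma> \<in> carrier_mat n m" using P T G w S \<Gamma> by auto
  have "X * adj P = (P * T + w * adj G) * adj P - S * \<Gamma> * adj P"
    unfolding Sylvester using P PT wG S\<Gamma> by (intro minus_mult_distrib_mat[of _ n m _ _ n]) auto
  also have "(P * T + w * adj G) * adj P = P * T * adj P + w * adj G * adj P"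
    using P PT wG by (intro add_mult_distrib_mat[of _ n m _ _ n]) auto
  also have "w * adj G * adj P = w * adj (P * G)"
    using P G w by (simp add: adj_mult assoc_mult_mat[of w n r "adj G" m "adj P" n])
  finally show "X * adj P = P * T * adj P + w * adj (P * G) - S * \<Gamma> * adj P" .
  have TP: "adj T * adj P \<in> carrier_mat m n" and Gw: "G * adj w \<in> carrier_mat m n"
    and \<Gamma>S: "\<Gamma> * adj S \<in> carrier_mat m n" using P T G \<Gamma> S w by auto
  have "adj X = adj T * adj P + G * adj w - \<Gamma> * adj S"
    unfolding Sylvester using P T G \<Gamma> S w PT wG S\<Gamma>
    by (simp add: adj_minus[of _ n m] adj_add[of _ n m] adj_mult adj_mult[OF w carrier_adj[OF G]] adj_\<Gamma>)
  then have "P * adj X = P * (adj T * adj P + G * adj w) - P * (\<Gamma> * adj S)"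
    using P TP Gw \<Gamma>S by (simp add: mult_minus_distrib_mat[of P n m _ n])
  also have "P * (adj T * adj P + G * adj w) = P * adj T * adj P + P * G * adj w"
    by (simp add: mult_add_distrib_mat[OF P TP Gw] assoc_mult_mat[OF P carrier_adj[OF T] carrier_adj[OF P]]
        assoc_mult_mat[OF P G carrier_adj[OF w]])
  also have "P * (\<Gamma> * adj S) = P * \<Gamma> * adj S"
    by (rule assoc_mult_mat[OF P \<Gamma> carrier_adj[OF S], symmetric])
  finally show "P * adj X = P * adj T * adj P + P * G * adj w - P * \<Gamma> * adj S" .
qed

lemma Lyapunov_residual_of_Sylvester:
  fixes P T G \<Gamma> S w B X :: "complex mat"
  assumes P: "P \<in> carrier_mat n m" and T: "T \<in> carrier_mat m m" and G: "G \<in> carrier_mat m r"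
    and \<Gamma>: "\<Gamma> \<in> carrier_mat m m" and S: "S \<in> carrier_mat n m"
    and w: "w \<in> carrier_mat n r" and B: "B \<in> carrier_mat n r"
    and Sylvester: "X = P * T + w * adj G - S * \<Gamma>"
    and T_add_adj: "T + adj T = - (G * adj G)"
    and PG: "P * G = w - B"
    and adj_\<Gamma>: "adj \<Gamma> = \<Gamma>"
  shows "X * adj P + P * adj X + B * adj B = - (S * \<Gamma> * adj P) - P * \<Gamma> * adj S + w * adj w"
proof -
  define D where "D = w - B"
  have D: "D \<in> carrier_mat n r" using w B by (simp add: D_def minus_carrier_mat)
  have PT: "P * T \<in> carrier_mat n m" and PT': "P * adj T \<in> carrier_mat n m" using P T by auto
  have "P * T * adj P + P * adj T * adj P = P * (T + adj T) * adj P"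
    by (simp add: add_mult_distrib_mat[OF PT PT' carrier_adj[OF P], symmetric]
        mult_add_distrib_mat[OF P T carrier_adj[OF T]])
  also have "\<dots> = - (D * adj D)"
    using P G
    by (simp add: T_add_adj D_def PG[symmetric] adj_mult assoc_mult_mat[OF P G carrier_adj[OF G], symmetric]
        assoc_mult_mat[OF mult_carrier_mat[OF P G] carrier_adj[OF G] carrier_adj[OF P]])
  finally have sandwich: "P * T * adj P + P * adj T * adj P = - (D * adj D)" .
  have "B = w - D" unfolding D_def using w B by (intro eq_matI) auto
  then have BB: "B * adj B = (w * adj w - D * adj w) - (w * adj D - D * adj D)"
    using minus_mult_adj_minus[OF w D] by simp
  show ?thesis
    unfolding Sylvester_mult_adj[OF P T G \<Gamma> S w Sylvester adj_\<Gamma>] BB PG D_def[symmetric]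
  proof (rule eq_matI)
    fix i k assume "i < dim_row (- (S * \<Gamma> * adj P) - P * \<Gamma> * adj S + w * adj w)"
      "k < dim_col (- (S * \<Gamma> * adj P) - P * \<Gamma> * adj S + w * adj w)"
    then have ik: "i < n" "k < n" using S w by simp_all
    note dims = carrier_matD[OF P] carrier_matD[OF S] carrier_matD[OF w] carrier_matD[OF D]
    have "(P * T * adj P) $$ (i, k) + (P * adj T * adj P) $$ (i, k) = - (D * adj D) $$ (i, k)"
      using arg_cong[OF sandwich, of "\<lambda>Y. Y $$ (i, k)"] ik dims by (simp del: index_mult_mat(1))
    then have "(P * adj T * adj P) $$ (i, k) = - (D * adj D) $$ (i, k) - (P * T * adj P) $$ (i, k)"
      by (simp add: eq_diff_eq add.commute)
    then show "(P * T * adj P + w * adj D - S * \<Gamma> * adj P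
        + (P * adj T * adj P + D * adj w - P * \<Gamma> * adj S)
        + (w * adj w - D * adj w - (w * adj D - D * adj D))) $$ (i, k)
      = (- (S * \<Gamma> * adj P) - P * \<Gamma> * adj S + w * adj w) $$ (i, k)"
      using ik dims by (simp del: index_mult_mat(1))
  qed (use S w P D in simp_all)
qed

section \<open>Kronecker products with an identity\<close>

lemma dim_kron [simp]:
  "dim_row (kron X Y) = dim_row X * dim_row Y"
  "dim_col (kron X Y) = dim_col X * dim_col Y"
  by (simp_all add: kron_def)

lemma adj_kron: "adj (kron X Y) = kron (adj X) (adj Y)"
proof (rule eq_matI)
  fix i k assume "i < dim_row (kron (adj X) (adj Y))" "k < dim_col (kron (adj X) (adj Y))"
  then have "i < dim_col X * dim_col Y" "k < dim_row X * dim_row Y" by simp_all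
  moreover from this have "dim_col Y > 0" "dim_row Y > 0" by (auto intro: gr0I)
  ultimately show "adj (kron X Y) $$ (i, k) = kron (adj X) (adj Y) $$ (i, k)"
    by (auto simp: kron_def less_mult_imp_div_less mult.commute[of "dim_col X"] mult.commute[of "dim_row X"])
qed simp_all

lemma index_kron_one:
  assumes "Y \<in> carrier_mat a b" "i < a" "k < b" "c < r" "d < r"
  shows "kron Y (1\<^sub>m r) $$ (i * r + c, k * r + d) = (if c = d then Y $$ (i, k) else 0)"
  using assms block_index_less[of i a c r] block_index_less[of k b d r] by (simp add: kron_def)

lemma index_mult_kron_one:
  assumes X: "X \<in> carrier_mat n (a * r)" and Y: "Y \<in> carrier_mat a b"
    and "p < n" "k < b" "c < r"
  shows "(X * kron Y (1\<^sub>m r)) $$ (p, k * r + c) = (\<Sum>i<a. X $$ (p, i * r + c) * Y $$ (i, k))"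
proof -
  have "(X * kron Y (1\<^sub>m r)) $$ (p, k * r + c)
      = (\<Sum>m<a * r. X $$ (p, m) * kron Y (1\<^sub>m r) $$ (m, k * r + c))"
    using assms block_index_less[of k b c r] by (simp add: scalar_prod_def atLeast0LessThan)
  also have "\<dots> = (\<Sum>i<a. \<Sum>d<r. X $$ (p, i * r + d) * (if d = c then Y $$ (i, k) else 0))"
    unfolding sum_lessThan_mult_blocks using assms by (intro sum.cong refl) (simp add: index_kron_one)
  also have "\<dots> = (\<Sum>i<a. X $$ (p, i * r + c) * Y $$ (i, k))"
    using \<open>c < r\<close> by (simp add: if_distrib cong: if_cong)
  finally show ?thesis .
qed

lemma kron_one_mult:
  assumes X: "X \<in> carrier_mat a b" and Y: "Y \<in> carrier_mat b d"
  shows "kron X (1\<^sub>m r) * kron Y (1\<^sub>m r) = kron (X * Y) (1\<^sub>m r)"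
proof (rule eq_matI)
  fix m q assume "m < dim_row (kron (X * Y) (1\<^sub>m r))" "q < dim_col (kron (X * Y) (1\<^sub>m r))"
  then have "m < a * r" "q < d * r" using X Y by simp_all
  then obtain i c' k c where m: "m = i * r + c'" "i < a" "c' < r" and q: "q = k * r + c" "k < d" "c < r"
    by (metis less_mult_blockE)
  have "(kron X (1\<^sub>m r) * kron Y (1\<^sub>m r)) $$ (m, q)
      = (\<Sum>l<b. kron X (1\<^sub>m r) $$ (i * r + c', l * r + c) * Y $$ (l, k))"
    unfolding m q using X Y m q by (intro index_mult_kron_one) (auto intro: block_index_less)
  also have "\<dots> = (\<Sum>l<b. (if c' = c then X $$ (i, l) else 0) * Y $$ (l, k))"
    using X m q by (intro sum.cong refl) (simp add: index_kron_one)
  also have "\<dots> = kron (X * Y) (1\<^sub>m r) $$ (m, q)"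
    unfolding m q using X Y m q
    by (simp add: index_kron_one[of _ a d] scalar_prod_def atLeast0LessThan)
  finally show "(kron X (1\<^sub>m r) * kron Y (1\<^sub>m r)) $$ (m, q)
      = kron (X * Y) (1\<^sub>m r) $$ (m, q)" .
qed (use X Y in simp_all)

lemma kron_add_left:
  assumes "X \<in> carrier_mat a b" "Y \<in> carrier_mat a b"
  shows "kron (X + Y) Z = kron X Z + kron Y Z"
proof (rule eq_matI)
  fix i k assume "i < dim_row (kron X Z + kron Y Z)" "k < dim_col (kron X Z + kron Y Z)"
  then have "i < a * dim_row Z" "k < b * dim_col Z" using assms by simp_all
  then show "kron (X + Y) Z $$ (i, k) = (kron X Z + kron Y Z) $$ (i, k)"
    using assms by (simp add: kron_def less_mult_imp_div_less distrib_right)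
qed (use assms in simp_all)

lemma kron_uminus_left: "kron (- X) Z = - kron X Z"
  by (rule eq_matI) (auto simp: kron_def less_mult_imp_div_less)

section \<open>The LR-ADI matrices\<close>

definition gam_col :: "(nat \<Rightarrow> complex) \<Rightarrow> nat \<Rightarrow> complex mat" where
  "gam_col \<alpha> j = mat j 1 (\<lambda>(i, _). gam \<alpha> (i + 1))"

definition gam_diag :: "(nat \<Rightarrow> complex) \<Rightarrow> nat \<Rightarrow> complex mat" where
  "gam_diag \<alpha> j = mat j j (\<lambda>(i, k). if i = k then gam \<alpha> (i + 1) else 0)"

lemma adi_g_conv_kron: "adi_g r \<alpha> j = kron (gam_col \<alpha> j) (1\<^sub>m r)"
  by (simp add: adi_g_def gam_col_def)

lemma adi_Gamma_conv_kron: "adi_Gamma r \<alpha> j = kron (gam_diag \<alpha> j) (1\<^sub>m r)"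
  by (simp add: adi_Gamma_def gam_diag_def)

lemma dim_gam_col [simp]: "dim_row (gam_col \<alpha> j) = j" "dim_col (gam_col \<alpha> j) = 1"
  by (simp_all add: gam_col_def)

lemma dim_gam_diag [simp]: "dim_row (gam_diag \<alpha> j) = j" "dim_col (gam_diag \<alpha> j) = j"
  by (simp_all add: gam_diag_def)

lemma dim_Ttil [simp]: "dim_row (Ttil \<alpha> j) = j" "dim_col (Ttil \<alpha> j) = j"
  by (simp_all add: Ttil_def)

lemma dim_adi_T [simp]: "dim_row (adi_T r \<alpha> j) = j * r" "dim_col (adi_T r \<alpha> j) = j * r"
  by (simp_all add: adi_T_def)

lemma dim_adi_g [simp]: "dim_row (adi_g r \<alpha> j) = j * r" "dim_col (adi_g r \<alpha> j) = r"
  by (simp_all add: adi_g_conv_kron)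

lemma dim_adi_Gamma [simp]:
  "dim_row (adi_Gamma r \<alpha> j) = j * r" "dim_col (adi_Gamma r \<alpha> j) = j * r"
  by (simp_all add: adi_Gamma_conv_kron)

lemma carrier_adi_T [simp]: "adi_T r \<alpha> j \<in> carrier_mat (j * r) (j * r)"
  by (auto intro!: carrier_matI)

lemma carrier_adi_g [simp]: "adi_g r \<alpha> j \<in> carrier_mat (j * r) r"
  by (auto intro!: carrier_matI)

lemma carrier_adi_Gamma [simp]: "adi_Gamma r \<alpha> j \<in> carrier_mat (j * r) (j * r)"
  by (auto intro!: carrier_matI)

lemma carrier_gam_col [simp]: "gam_col \<alpha> j \<in> carrier_mat j 1"
  by (auto intro!: carrier_matI)

lemma carrier_Ttil [simp]: "Ttil \<alpha> j \<in> carrier_mat j j"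
  by (auto intro!: carrier_matI)

lemma cnj_gam [simp]: "cnj (gam \<alpha> i) = gam \<alpha> i"
  by (simp add: gam_def)

lemma shift_add_cnj:
  assumes "Re (\<alpha> i) \<le> 0"
  shows "\<alpha> i + cnj (\<alpha> i) = - (gam \<alpha> i)\<^sup>2"
proof -
  have "(gam \<alpha> i)\<^sup>2 = complex_of_real (- 2 * Re (\<alpha> i))"
    using assms by (simp add: gam_def flip: of_real_power)
  then show ?thesis by (simp add: complex_add_cnj)
qed

lemma adj_gam_diag: "adj (gam_diag \<alpha> j) = gam_diag \<alpha> j"
  by (rule eq_matI) (auto simp: gam_diag_def)

lemma Ttil_add_adj:
  assumes "\<forall>i\<in>{1..j}. Re (\<alpha> i) < 0"
  shows "Ttil \<alpha> j + adj (Ttil \<alpha> j) = - (gam_col \<alpha> j * adj (gam_col \<alpha> j))"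
proof (rule eq_matI)
  fix i k assume "i < dim_row (- (gam_col \<alpha> j * adj (gam_col \<alpha> j)))"
    "k < dim_col (- (gam_col \<alpha> j * adj (gam_col \<alpha> j)))"
  then have ik: "i < j" "k < j" by (simp_all add: gam_col_def)
  then have "\<alpha> (i + 1) + cnj (\<alpha> (i + 1)) = - (gam \<alpha> (i + 1))\<^sup>2"
    using assms by (intro shift_add_cnj less_imp_le) auto
  then show "(Ttil \<alpha> j + adj (Ttil \<alpha> j)) $$ (i, k)
      = (- (gam_col \<alpha> j * adj (gam_col \<alpha> j))) $$ (i, k)"
    using ik by (auto simp: Ttil_def gam_col_def scalar_prod_def power2_eq_square add.commute mult.commute)
qed (simp_all add: Ttil_def gam_col_def)

lemma adi_T_add_adj:
  assumes "\<forall>i\<in>{1..j}. Re (\<alpha> i) < 0"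
  shows "adi_T r \<alpha> j + adj (adi_T r \<alpha> j) = - (adi_g r \<alpha> j * adj (adi_g r \<alpha> j))"
proof -
  have "adi_T r \<alpha> j + adj (adi_T r \<alpha> j)
      = kron (Ttil \<alpha> j + adj (Ttil \<alpha> j)) (1\<^sub>m r)"
    by (simp add: adi_T_def adj_kron kron_add_left[OF carrier_Ttil carrier_adj[OF carrier_Ttil]])
  also have "\<dots> = - (adi_g r \<alpha> j * adj (adi_g r \<alpha> j))"
    by (simp add: Ttil_add_adj[OF assms] kron_uminus_left adi_g_conv_kron adj_kron
        kron_one_mult[OF carrier_gam_col carrier_adj[OF carrier_gam_col]])
  finally show ?thesis .
qed

lemma adj_adi_Gamma: "adj (adi_Gamma r \<alpha> j) = adi_Gamma r \<alpha> j"
  by (simp add: adi_Gamma_conv_kron adj_kron adj_gam_diag)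

lemma sum_mult_Ttil_column:
  assumes "k < j"
  shows "(\<Sum>i<j. f i * Ttil \<alpha> j $$ (i, k))
    = f k * cnj (\<alpha> (k + 1)) - gam \<alpha> (k + 1) * (\<Sum>i\<in>{k<..<j}. gam \<alpha> (i + 1) * f i)"
proof -
  have "(\<Sum>i<j. f i * Ttil \<alpha> j $$ (i, k))
      = (\<Sum>i<k. f i * Ttil \<alpha> j $$ (i, k)) + f k * Ttil \<alpha> j $$ (k, k)
        + (\<Sum>i\<in>{k<..<j}. f i * Ttil \<alpha> j $$ (i, k))"
    using assms by (rule sum_lessThan_split_at)
  also have "\<dots> = f k * cnj (\<alpha> (k + 1))
      - (\<Sum>i\<in>{k<..<j}. f i * (gam \<alpha> (i + 1) * gam \<alpha> (k + 1)))"
    using assms by (simp add: Ttil_def sum_negf)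
  finally show ?thesis by (simp add: sum_distrib_left algebra_simps)
qed

lemma dim_adi_Z [simp]: "dim_row (adi_Z n r \<alpha> v j) = n" "dim_col (adi_Z n r \<alpha> v j) = j * r"
  by (simp_all add: adi_Z_def)

lemma dim_adi_S [simp]:
  "dim_row (adi_S n r A M B \<alpha> v j) = n" "dim_col (adi_S n r A M B \<alpha> v j) = j * r"
  by (simp_all add: adi_S_def)

lemma carrier_adi_Z [simp]: "adi_Z n r \<alpha> v j \<in> carrier_mat n (j * r)"
  by (auto intro!: carrier_matI)

lemma carrier_adi_S [simp]: "adi_S n r A M B \<alpha> v j \<in> carrier_mat n (j * r)"
  by (auto intro!: carrier_matI)

lemma index_adi_S:
  "p < n \<Longrightarrow> k < j \<Longrightarrow> c < r \<Longrightarrow>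
    adi_S n r A M B \<alpha> v j $$ (p, k * r + c) = adi_s A M B \<alpha> v (k + 1) $$ (p, c)"
  by (simp add: adi_S_def block_index_less)

lemma index_mult_adi_Z:
  assumes X: "X \<in> carrier_mat m n" and v: "v (k + 1) \<in> carrier_mat n r"
    and "p < m" "k < j" "c < r"
  shows "(X * adi_Z n r \<alpha> v j) $$ (p, k * r + c) = gam \<alpha> (k + 1) * (X * v (k + 1)) $$ (p, c)"
  using assms block_index_less[of k j c r]
  by (simp add: adi_Z_def scalar_prod_def sum_distrib_left algebra_simps)

lemma carrier_adi_w:
  assumes "M \<in> carrier_mat n n" "B \<in> carrier_mat n r" "\<forall>l\<in>{1..i}. v l \<in> carrier_mat n r"
  shows "adi_w M B \<alpha> v i \<in> carrier_mat n r"
  using assms by (induction i) auto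

lemma index_adi_w:
  assumes M: "M \<in> carrier_mat n n" and B: "B \<in> carrier_mat n r"
    and v: "\<forall>l\<in>{1..i}. v l \<in> carrier_mat n r" and "p < n" "c < r"
  shows "adi_w M B \<alpha> v i $$ (p, c)
    = B $$ (p, c) + (\<Sum>l<i. (gam \<alpha> (l + 1))\<^sup>2 * (M * v (l + 1)) $$ (p, c))"
  using v
proof (induction i)
  case (Suc i)
  then have v: "v (Suc i) \<in> carrier_mat n r" by simp
  with Suc show ?case
    using M B \<open>p < n\<close> \<open>c < r\<close> carrier_adi_w[OF M B, of i v \<alpha>]
    by (simp add: carrier_matD[OF v])
qed simp

lemma index_adi_s:
  assumes A: "A \<in> carrier_mat n n" and M: "M \<in> carrier_mat n n" and B: "B \<in> carrier_mat n r"
    and v: "\<forall>l\<in>{1..k + 1}. v l \<in> carrier_mat n r" and "p < n" "c < r"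
  shows "adi_s A M B \<alpha> v (k + 1) $$ (p, c)
    = adi_w M B \<alpha> v k $$ (p, c) - (A * v (k + 1)) $$ (p, c)
      - \<alpha> (k + 1) * (M * v (k + 1)) $$ (p, c)"
proof -
  have vk: "v (k + 1) \<in> carrier_mat n r" using v by simp
  have "(A + \<alpha> (k + 1) \<cdot>\<^sub>m M) * v (k + 1) = A * v (k + 1) + \<alpha> (k + 1) \<cdot>\<^sub>m (M * v (k + 1))"
    using A M vk by (simp add: add_mult_distrib_mat mult_smult_assoc_mat)
  moreover have "adi_w M B \<alpha> v k \<in> carrier_mat n r"
    using v by (intro carrier_adi_w[OF M B]) auto
  ultimately show ?thesis
    using A M vk \<open>p < n\<close> \<open>c < r\<close> by (simp add: adi_s_def)
qed

lemma mult_adi_Z_adi_g: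
  assumes M: "M \<in> carrier_mat n n" and B: "B \<in> carrier_mat n r"
    and v: "\<forall>i\<in>{1..j}. v i \<in> carrier_mat n r"
  shows "M * adi_Z n r \<alpha> v j * adi_g r \<alpha> j = adi_w M B \<alpha> v j - B"
proof (rule eq_matI)
  fix p c assume "p < dim_row (adi_w M B \<alpha> v j - B)" "c < dim_col (adi_w M B \<alpha> v j - B)"
  then have p: "p < n" and c: "c < r" using B by simp_all
  have "(M * adi_Z n r \<alpha> v j * adi_g r \<alpha> j) $$ (p, 0 * r + c)
      = (\<Sum>i<j. (M * adi_Z n r \<alpha> v j) $$ (p, i * r + c) * gam_col \<alpha> j $$ (i, 0))"
    unfolding adi_g_conv_kron using M p c by (intro index_mult_kron_one[where b = 1]) (auto simp: gam_col_def)
  also have "\<dots> = (\<Sum>i<j. (gam \<alpha> (i + 1))\<^sup>2 * (M * v (i + 1)) $$ (p, c))"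
    using M v p c by (intro sum.cong refl) (simp add: index_mult_adi_Z gam_col_def power2_eq_square)
  also have "\<dots> = (adi_w M B \<alpha> v j - B) $$ (p, c)"
    using index_adi_w[OF M B v p c] carrier_adi_w[OF M B v] B p c by simp
  finally show "(M * adi_Z n r \<alpha> v j * adi_g r \<alpha> j) $$ (p, c)
      = (adi_w M B \<alpha> v j - B) $$ (p, c)"
    by simp
qed (use B M in \<open>simp_all add: adi_g_conv_kron\<close>)

lemma index_mult_adi_Z_T:
  assumes X: "X \<in> carrier_mat m n" and v: "\<forall>i\<in>{1..j}. v i \<in> carrier_mat n r"
    and p: "p < m" and k: "k < j" and c: "c < r"
  shows "(X * adi_Z n r \<alpha> v j * adi_T r \<alpha> j) $$ (p, k * r + c)
    = gam \<alpha> (k + 1) * (cnj (\<alpha> (k + 1)) * (X * v (k + 1)) $$ (p, c)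
        - (\<Sum>i\<in>{k<..<j}. (gam \<alpha> (i + 1))\<^sup>2 * (X * v (i + 1)) $$ (p, c)))"
proof -
  have "(X * adi_Z n r \<alpha> v j * adi_T r \<alpha> j) $$ (p, k * r + c)
      = (\<Sum>i<j. (X * adi_Z n r \<alpha> v j) $$ (p, i * r + c) * Ttil \<alpha> j $$ (i, k))"
    unfolding adi_T_def using X p k c by (intro index_mult_kron_one) auto
  also have "\<dots> = (\<Sum>i<j. gam \<alpha> (i + 1) * (X * v (i + 1)) $$ (p, c) * Ttil \<alpha> j $$ (i, k))"
    using X v p c by (intro sum.cong refl) (simp add: index_mult_adi_Z)
  also have "\<dots> = gam \<alpha> (k + 1) * (X * v (k + 1)) $$ (p, c) * cnj (\<alpha> (k + 1))
      - gam \<alpha> (k + 1)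
        * (\<Sum>i\<in>{k<..<j}. gam \<alpha> (i + 1) * (gam \<alpha> (i + 1) * (X * v (i + 1)) $$ (p, c)))"
    by (rule sum_mult_Ttil_column[OF k])
  finally show ?thesis
    by (simp add: power2_eq_square mult.assoc right_diff_distrib mult.left_commute)
qed

lemma index_mult_adj_adi_g:
  assumes W: "W \<in> carrier_mat n r" and "p < n" "k < j" "c < r"
  shows "(W * adj (adi_g r \<alpha> j)) $$ (p, k * r + c) = W $$ (p, c) * gam \<alpha> (k + 1)"
proof -
  have "W \<in> carrier_mat n (1 * r)" using W by simp
  then have "(W * adj (adi_g r \<alpha> j)) $$ (p, k * r + c)
      = (\<Sum>i<1. W $$ (p, i * r + c) * adj (gam_col \<alpha> j) $$ (i, k))"
    unfolding adi_g_conv_kron adj_kron adj_one using assms by (intro index_mult_kron_one) auto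
  then show ?thesis using assms by (simp add: gam_col_def)
qed

lemma index_mult_adi_Gamma:
  assumes X: "X \<in> carrier_mat n (j * r)" and "p < n" "k < j" "c < r"
  shows "(X * adi_Gamma r \<alpha> j) $$ (p, k * r + c) = X $$ (p, k * r + c) * gam \<alpha> (k + 1)"
proof -
  have "(X * adi_Gamma r \<alpha> j) $$ (p, k * r + c)
      = (\<Sum>i<j. X $$ (p, i * r + c) * gam_diag \<alpha> j $$ (i, k))"
    unfolding adi_Gamma_conv_kron using assms by (intro index_mult_kron_one) auto
  then show ?thesis using assms by (simp add: gam_diag_def if_distrib cong: if_cong)
qed

lemma adi_Sylvester:
  assumes A: "A \<in> carrier_mat n n" and M: "M \<in> carrier_mat n n" and B: "B \<in> carrier_mat n r"
    and neg: "\<forall>i\<in>{1..j}. Re (\<alpha> i) < 0"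
    and v: "\<forall>i\<in>{1..j}. v i \<in> carrier_mat n r"
  shows "A * adi_Z n r \<alpha> v j = M * adi_Z n r \<alpha> v j * adi_T r \<alpha> j
    + adi_w M B \<alpha> v j * adj (adi_g r \<alpha> j) - adi_S n r A M B \<alpha> v j * adi_Gamma r \<alpha> j"
  (is "?L = ?MZT + ?wg - ?SG")
proof (rule eq_matI)
  let ?w = "adi_w M B \<alpha> v j" and ?s = "adi_s A M B \<alpha> v"
  fix p q assume "p < dim_row (?MZT + ?wg - ?SG)" "q < dim_col (?MZT + ?wg - ?SG)"
  then have p: "p < n" and "q < j * r" by simp_all
  then obtain k c where q: "q = k * r + c" and k: "k < j" and c: "c < r"
    by (metis less_mult_blockE)
  define g where "g i = gam \<alpha> (i + 1)" for i
  define a where "a i = (M * v (i + 1)) $$ (p, c)" for i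
  define x where "x = (A * v (k + 1)) $$ (p, c)"
  define tail where "tail = (\<Sum>i\<in>{k<..<j}. (g i)\<^sup>2 * a i)"
  have wc: "?w \<in> carrier_mat n r" using M B v by (rule carrier_adi_w)
  have L: "?L $$ (p, q) = g k * x"
    unfolding q g_def x_def using A _ p k c by (rule index_mult_adi_Z) (use v k in simp)
  have MZT: "?MZT $$ (p, q) = g k * (cnj (\<alpha> (k + 1)) * a k - tail)"
    unfolding q g_def a_def tail_def using M v p k c by (rule index_mult_adi_Z_T)
  have wg: "?wg $$ (p, q) = ?w $$ (p, c) * g k"
    unfolding q g_def using wc p k c by (rule index_mult_adj_adi_g)
  have SG: "?SG $$ (p, q) = ?s (k + 1) $$ (p, c) * g k"
    unfolding q g_def using index_mult_adi_Gamma[OF carrier_adi_S p k c] index_adi_S[OF p k c] by simp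
  have w: "?w $$ (p, c) = B $$ (p, c) + (\<Sum>i<k. (g i)\<^sup>2 * a i) + (g k)\<^sup>2 * a k + tail"
    using index_adi_w[OF M B v p c, of \<alpha>] sum_lessThan_split_at[OF k, of "\<lambda>i. (g i)\<^sup>2 * a i"]
    unfolding g_def a_def tail_def by (simp add: add.assoc)
  have s: "?s (k + 1) $$ (p, c) = B $$ (p, c) + (\<Sum>i<k. (g i)\<^sup>2 * a i) - x - \<alpha> (k + 1) * a k"
    using index_adi_s[OF A M B _ p c, where v = v and k = k and \<alpha> = \<alpha>]
      index_adi_w[OF M B _ p c, where i = k and v = v and \<alpha> = \<alpha>] v k
    unfolding g_def a_def x_def by simp
  have "(?MZT + ?wg - ?SG) $$ (p, q) = ?MZT $$ (p, q) + ?wg $$ (p, q) - ?SG $$ (p, q)"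
    using M p \<open>q < j * r\<close> carrier_matD[OF wc] by (simp del: index_mult_mat(1))
  also have "\<dots> = g k * x + g k * a k * (\<alpha> (k + 1) + cnj (\<alpha> (k + 1)) + (g k)\<^sup>2)"
    unfolding MZT wg SG w s by (simp add: algebra_simps power2_eq_square)
  also have "\<alpha> (k + 1) + cnj (\<alpha> (k + 1)) = - (g k)\<^sup>2"
    using neg k unfolding g_def by (intro shift_add_cnj less_imp_le) auto
  finally show "?L $$ (p, q) = (?MZT + ?wg - ?SG) $$ (p, q)"
    unfolding L by simp
qed (use A in simp_all)

theorem theorem3p2:
  fixes A M B :: "real mat" and n r j :: nat
    and \<alpha> :: "nat \<Rightarrow> complex" and v :: "nat \<Rightarrow> complex mat"
  assumes "A \<in> carrier_mat n n" and "M \<in> carrier_mat n n" and "invertible_mat M"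
    and "B \<in> carrier_mat n r"
    and "\<forall>i\<in>{1..j}. Re (\<alpha> i) < 0"
    and "\<forall>i\<in>{1..j}. v i \<in> carrier_mat n r"
  shows
   "let cA = cmat A; cM = cmat M; cB = cmat B;
        Z = adi_Z n r \<alpha> v j; S = adi_S n r cA cM cB \<alpha> v j;
        w = adi_w cM cB \<alpha> v j; \<Gamma> = adi_Gamma r \<alpha> j
    in cA * Z = cM * Z * adi_T r \<alpha> j + w * adj (adi_g r \<alpha> j) - S * \<Gamma>
     \<and> cA * Z * adj Z * adj cM + cM * Z * adj Z * adj cA + cB * adj cB
         = - (S * \<Gamma> * adj Z * adj cM) - cM * Z * \<Gamma> * adj S + w * adj w"
proof -
  have A: "cmat A \<in> carrier_mat n n" and M: "cmat M \<in> carrier_mat n n"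
    and B: "cmat B \<in> carrier_mat n r"
    using assms(1,2,4) by (simp_all add: cmat_def)
  let ?Z = "adi_Z n r \<alpha> v j" and ?S = "adi_S n r (cmat A) (cmat M) (cmat B) \<alpha> v j"
    and ?w = "adi_w (cmat M) (cmat B) \<alpha> v j" and ?\<Gamma> = "adi_Gamma r \<alpha> j"
  have Z: "?Z \<in> carrier_mat n (j * r)" by simp
  have Sylvester:
    "cmat A * ?Z = cmat M * ?Z * adi_T r \<alpha> j + ?w * adj (adi_g r \<alpha> j) - ?S * ?\<Gamma>"
    using A M B assms(5,6) by (rule adi_Sylvester)
  have "cmat A * ?Z * adj (cmat M * ?Z) + cmat M * ?Z * adj (cmat A * ?Z) + cmat B * adj (cmat B)
      = - (?S * ?\<Gamma> * adj (cmat M * ?Z)) - cmat M * ?Z * ?\<Gamma> * adj ?S + ?w * adj ?w"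
    by (rule Lyapunov_residual_of_Sylvester[OF mult_carrier_mat[OF M Z] carrier_adi_T carrier_adi_g
          carrier_adi_Gamma carrier_adi_S carrier_adi_w[OF M B assms(6)] B Sylvester
          adi_T_add_adj[OF assms(5)] mult_adi_Z_adi_g[OF M B assms(6)] adj_adi_Gamma])
  moreover have "X * adj (Y * ?Z) = X * adj ?Z * adj Y"
    if "X \<in> carrier_mat n (j * r)" "Y \<in> carrier_mat n n" for X Y
    using that Z
    by (simp add: adj_mult[OF that(2) Z]
        assoc_mult_mat[OF that(1) carrier_adj[OF Z] carrier_adj[OF that(2)]])
  moreover have "cmat A * ?Z \<in> carrier_mat n (j * r)" "cmat M * ?Z \<in> carrier_mat n (j * r)"
    "?S * ?\<Gamma> \<in> carrier_mat n (j * r)" using A M Z by (auto intro: carrier_matI)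
  ultimately have "cmat A * ?Z * adj ?Z * adj (cmat M) + cmat M * ?Z * adj ?Z * adj (cmat A)
      + cmat B * adj (cmat B)
      = - (?S * ?\<Gamma> * adj ?Z * adj (cmat M)) - cmat M * ?Z * ?\<Gamma> * adj ?S + ?w * adj ?w"
    using A M by simp
  with Sylvester show ?thesis
    unfolding Let_def by (rule conjI)
qed

end
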